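(* Let $G$ be a totally disconnected, locally compact group, $g\in G$ and $U$ a compact open subgroup of $G$ such that the indices $|U:U\cap g^{-1}Ug|$ and $|U:U\cap gUg^{-1}|$ are coprime. Then $U$ is tidy for $g$ and $s(g)=|U:U\cap g^{-1}Ug|$.
   Context: The scale function of a totally disconnected, locally compact group $G$ is $s(g)=\min\{|U:U\cap g^{-1}Ug| : U \text{ a compact open subgroup of } G\}$. A compact open subgroup $U$ is tidy for $g$ if this minimum is attained at $U$. *)

theory Defs
  imports "HOL-Analysis.Analysis" "HOL-Algebra.Coset" "HOL-Computational_Algebra.Primes"
begin

definition topological_group :: "('a, 'b) monoid_scheme \<Rightarrow> 'a topology \<Rightarrow> bool" where
  "topological_group G T \<longleftrightarrow> group G \<and> topspace T = carrier G \<and>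
     continuous_map (prod_topology T T) T (\<lambda>p. fst p \<otimes>\<^bsub>G\<^esub> snd p) \<and>
     continuous_map T T (\<lambda>x. inv\<^bsub>G\<^esub> x)"

definition totally_disconnected_space :: "'a topology \<Rightarrow> bool" where
  "totally_disconnected_space T \<longleftrightarrow>
     (\<forall>S. connectedin T S \<longrightarrow> (\<exists>x. S \<subseteq> {x}))"

definition tdlc_group :: "('a, 'b) monoid_scheme \<Rightarrow> 'a topology \<Rightarrow> bool" where
  "tdlc_group G T \<longleftrightarrow> topological_group G T \<and> totally_disconnected_space T \<and>
     locally_compact_space T"

definition compact_open_subgroup :: "('a, 'b) monoid_scheme \<Rightarrow> 'a topology \<Rightarrow> 'a set \<Rightarrow> bool" where
  "compact_open_subgroup G T U \<longleftrightarrow> subgroup U G \<and> openin T U \<and> compactin T U"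

definition subgroup_index :: "('a, 'b) monoid_scheme \<Rightarrow> 'a set \<Rightarrow> 'a set \<Rightarrow> nat" where
  "subgroup_index G H K = card ((\<lambda>x. K #>\<^bsub>G\<^esub> x) ` H)"

definition conj_set :: "('a, 'b) monoid_scheme \<Rightarrow> 'a \<Rightarrow> 'a set \<Rightarrow> 'a set" where
  "conj_set G x U = (x <#\<^bsub>G\<^esub> U) #>\<^bsub>G\<^esub> (inv\<^bsub>G\<^esub> x)"

definition scale :: "('a, 'b) monoid_scheme \<Rightarrow> 'a topology \<Rightarrow> 'a \<Rightarrow> nat" where
  "scale G T g = (LEAST n. \<exists>U. compact_open_subgroup G T U \<and>
       n = subgroup_index G U (U \<inter> conj_set G (inv\<^bsub>G\<^esub> g) U))"

definition tidy :: "('a, 'b) monoid_scheme \<Rightarrow> 'a topology \<Rightarrow> 'a \<Rightarrow> 'a set \<Rightarrow> bool" where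
  "tidy G T g U \<longleftrightarrow> compact_open_subgroup G T U \<and>
     subgroup_index G U (U \<inter> conj_set G (inv\<^bsub>G\<^esub> g) U) = scale G T g"

end

theory Submission
  imports Defs "HOL-Algebra.Group_Action"
begin

text \<open>Write \<open>a(V) = |V : V \<inter> g\<^sup>-\<^sup>1Vg|\<close> and \<open>b(V) = |V : V \<inter> gVg\<^sup>-\<^sup>1|\<close>; conjugating by \<open>g\<^sup>-\<^sup>1\<close>
  gives \<open>b(V) = |g\<^sup>-\<^sup>1Vg : g\<^sup>-\<^sup>1Vg \<inter> V|\<close>. For compact open subgroups \<open>A, B\<close> and an open
  subgroup \<open>D \<subseteq> A \<inter> B\<close>, multiplicativity of indices gives
  \<open>|A : D| / |B : D| = |A : A \<inter> B| / |B : A \<inter> B|\<close>. Comparing two compact open subgroups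
  \<open>U, W\<close> and their conjugates through the common subgroup \<open>U \<inter> W \<inter> g\<^sup>-\<^sup>1(U \<inter> W)g\<close>, and using
  that conjugation preserves indices, shows that \<open>a(V)/b(V)\<close> does not depend on \<open>V\<close>,
  i.e. \<open>a(U) b(W) = a(W) b(U)\<close>. If \<open>a(U)\<close> and \<open>b(U)\<close> are coprime, \<open>a(U)\<close> therefore divides
  every \<open>a(W)\<close>, so it is the minimum \<open>s(g)\<close>.\<close>

context group
begin

lemma inj_on_rcoset_Pow:
  assumes "x \<in> carrier G"
  shows "inj_on (\<lambda>S. S #> x) (Pow (carrier G))"
proof (rule inj_onI)
  fix S S' assume "S \<in> Pow (carrier G)" "S' \<in> Pow (carrier G)" "S #> x = S' #> x"
  then have "(S #> x) #> inv x = (S' #> x) #> inv x" by simp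
  with assms \<open>S \<in> Pow (carrier G)\<close> \<open>S' \<in> Pow (carrier G)\<close> show "S = S'"
    by (simp add: coset_mult_assoc)
qed

lemma rcosets_of_rcoset:
  assumes "B \<subseteq> carrier G" "C \<subseteq> carrier G" "x \<in> carrier G"
  shows "(\<lambda>y. C #> y) ` (B #> x) = (\<lambda>S. S #> x) ` ((\<lambda>y. C #> y) ` B)"
proof -
  have "(\<lambda>y. C #> y) ` (B #> x) = (\<lambda>b. C #> (b \<otimes> x)) ` B"
    by (auto simp: r_coset_def)
  also have "\<dots> = (\<lambda>b. (C #> b) #> x) ` B"
    using assms by (intro image_cong) (auto simp: coset_mult_assoc)
  finally show ?thesis by (simp add: image_image)
qed

lemma card_rcosets_rcoset:
  assumes "B \<subseteq> carrier G" "C \<subseteq> carrier G" "x \<in> carrier G"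
  shows "card ((\<lambda>y. C #> y) ` (B #> x)) = subgroup_index G B C"
proof -
  have "(\<lambda>y. C #> y) ` B \<subseteq> Pow (carrier G)"
    using r_coset_subset_G[OF assms(2)] assms(1) by blast
  with inj_on_rcoset_Pow[OF assms(3)] have "inj_on (\<lambda>S. S #> x) ((\<lambda>y. C #> y) ` B)"
    by (rule inj_on_subset)
  then show ?thesis
    using rcosets_of_rcoset[OF assms] by (simp add: card_image subgroup_index_def)
qed

lemma rcos_eq_mono:
  assumes B: "subgroup B G" and C: "subgroup C G" and "C \<subseteq> B"
    and y: "y1 \<in> carrier G" "y2 \<in> carrier G" and eq: "C #> y1 = C #> y2"
  shows "B #> y1 = B #> y2"
proof -
  have "y2 \<in> C #> y1"
    using rcos_self[OF y(2) C] eq by simp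
  then have "y2 \<in> B #> y1"
    using \<open>C \<subseteq> B\<close> by (auto simp: r_coset_def)
  then show ?thesis
    using repr_independence[OF _ y(1) B] by simp
qed

lemma rcosets_eq_UN_rcosets:
  assumes A: "subgroup A G" and B: "subgroup B G" and "B \<subseteq> A"
  shows "(\<lambda>y. C #> y) ` A = (\<Union>S \<in> (\<lambda>x. B #> x) ` A. (\<lambda>y. C #> y) ` S)"
proof
  show "(\<lambda>y. C #> y) ` A \<subseteq> (\<Union>S \<in> (\<lambda>x. B #> x) ` A. (\<lambda>y. C #> y) ` S)"
  proof (rule image_subsetI)
    fix y assume "y \<in> A"
    then have "y \<in> B #> y"
      using rcos_self[OF _ B] subgroup.subset[OF A] by blast
    with \<open>y \<in> A\<close> show "C #> y \<in> (\<Union>S \<in> (\<lambda>x. B #> x) ` A. (\<lambda>y. C #> y) ` S)"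
      by (intro UN_I[of "B #> y"] imageI)
  qed
  show "(\<Union>S \<in> (\<lambda>x. B #> x) ` A. (\<lambda>y. C #> y) ` S) \<subseteq> (\<lambda>y. C #> y) ` A"
    using \<open>B \<subseteq> A\<close> subgroup.m_closed[OF A] by (auto simp: r_coset_def)
qed

lemma subgroup_index_mult:
  assumes A: "subgroup A G" and B: "subgroup B G" and C: "subgroup C G"
    and "C \<subseteq> B" "B \<subseteq> A"
    and AB: "0 < subgroup_index G A B" and BC: "0 < subgroup_index G B C"
  shows "subgroup_index G A C = subgroup_index G A B * subgroup_index G B C"
proof -
  let ?fibre = "\<lambda>S. (\<lambda>y. C #> y) ` S"
  have Ac: "A \<subseteq> carrier G" and Bc: "B \<subseteq> carrier G" and Cc: "C \<subseteq> carrier G"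
    using A B C subgroup.subset by blast+
  have card_fibre: "card (?fibre (B #> x)) = subgroup_index G B C" if "x \<in> A" for x
    using card_rcosets_rcoset[OF Bc Cc] that Ac by blast
  have disjoint: "?fibre S1 \<inter> ?fibre S2 = {}"
    if S1: "S1 \<in> (\<lambda>x. B #> x) ` A" and S2: "S2 \<in> (\<lambda>x. B #> x) ` A" and "S1 \<noteq> S2"
    for S1 S2
  proof (rule ccontr)
    assume "?fibre S1 \<inter> ?fibre S2 \<noteq> {}"
    then obtain y1 y2 where y: "y1 \<in> S1" "y2 \<in> S2" "C #> y1 = C #> y2" by blast
    from S1 S2 obtain x1 x2 where x: "x1 \<in> A" "S1 = B #> x1" "x2 \<in> A" "S2 = B #> x2"
      by blast
    have carrier: "y1 \<in> carrier G" "y2 \<in> carrier G"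
      using x y Ac Bc r_coset_subset_G by blast+
    have "S1 = B #> y1"
      using repr_independence[OF _ _ B, of y1 x1] x y(1) Ac by auto
    moreover have "S2 = B #> y2"
      using repr_independence[OF _ _ B, of y2 x2] x y(2) Ac by auto
    ultimately show False
      using rcos_eq_mono[OF B C \<open>C \<subseteq> B\<close> carrier y(3)] \<open>S1 \<noteq> S2\<close> by simp
  qed
  have "subgroup_index G A C = (\<Sum>S \<in> (\<lambda>x. B #> x) ` A. card (?fibre S))"
    unfolding subgroup_index_def rcosets_eq_UN_rcosets[OF A B \<open>B \<subseteq> A\<close>, of C]
  proof (rule card_UN_disjoint)
    show "finite ((\<lambda>x. B #> x) ` A)"
      using AB unfolding subgroup_index_def by (rule card_ge_0_finite)
    show "\<forall>S \<in> (\<lambda>x. B #> x) ` A. finite (?fibre S)"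
    proof
      fix S assume "S \<in> (\<lambda>x. B #> x) ` A"
      then obtain x where "x \<in> A" "S = B #> x" by blast
      with card_fibre BC show "finite (?fibre S)"
        by (intro card_ge_0_finite) simp
    qed
  qed (intro ballI impI disjoint)
  also have "\<dots> = (\<Sum>S \<in> (\<lambda>x. B #> x) ` A. subgroup_index G B C)"
    using card_fibre by (intro sum.cong) auto
  finally show ?thesis
    by (simp add: subgroup_index_def)
qed

lemma conj_set_eq_image: "conj_set G h X = (\<lambda>x. h \<otimes> x \<otimes> inv h) ` X"
  by (auto simp: conj_set_def l_coset_def r_coset_def)

lemma conj_set_subset_carrier:
  "h \<in> carrier G \<Longrightarrow> X \<subseteq> carrier G \<Longrightarrow> conj_set G h X \<subseteq> carrier G"
  by (auto simp: conj_set_eq_image)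

lemma conj_set_inv_conj_set:
  "h \<in> carrier G \<Longrightarrow> X \<subseteq> carrier G \<Longrightarrow> conj_set G (inv h) (conj_set G h X) = X"
  using subgroup_conjugation_is_surj0[of "inv h" X] by (simp add: conj_set_def)

lemma inj_on_conj_set: "h \<in> carrier G \<Longrightarrow> inj_on (conj_set G h) (Pow (carrier G))"
  by (rule inj_onI) (use subgroup_conjugation_is_inj in \<open>auto simp: conj_set_def\<close>)

lemma conj_set_Int:
  assumes "h \<in> carrier G" "X \<subseteq> carrier G" "Y \<subseteq> carrier G"
  shows "conj_set G h (X \<inter> Y) = conj_set G h X \<inter> conj_set G h Y"
proof -
  have "inj_on (\<lambda>x. h \<otimes> x \<otimes> inv h) (carrier G)"
    using assms(1) by (auto intro: inj_onI)
  with assms show ?thesis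
    unfolding conj_set_eq_image by (simp add: inj_on_image_Int)
qed

lemma subgroup_conj_set: "h \<in> carrier G \<Longrightarrow> subgroup H G \<Longrightarrow> subgroup (conj_set G h H) G"
  unfolding conj_set_def by (rule subgroup_conjugation_is_surj2)

lemma conj_set_rcoset:
  assumes "h \<in> carrier G" "B \<subseteq> carrier G" "x \<in> carrier G"
  shows "conj_set G h (B #> x) = conj_set G h B #> (h \<otimes> x \<otimes> inv h)"
  using assms
  by (simp add: conj_set_def coset_assoc coset_mult_assoc l_coset_subset_G m_assoc[symmetric])

lemma subgroup_index_conj_set:
  assumes h: "h \<in> carrier G" and "A \<subseteq> carrier G" "B \<subseteq> carrier G"
  shows "subgroup_index G (conj_set G h A) (conj_set G h B) = subgroup_index G A B"
proof -
  have "(\<lambda>y. conj_set G h B #> y) ` conj_set G h A = conj_set G h ` (\<lambda>x. B #> x) ` A"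
    using assms by (auto simp: conj_set_eq_image[of h A] conj_set_rcoset image_image
        intro!: image_cong)
  moreover have "inj_on (conj_set G h) ((\<lambda>x. B #> x) ` A)"
    using inj_on_conj_set[OF h] r_coset_subset_G assms by (blast intro: inj_on_subset)
  ultimately show ?thesis
    by (simp add: subgroup_index_def card_image)
qed

lemma subgroup_index_Int_conj_set_inv:
  assumes h: "h \<in> carrier G" and U: "U \<subseteq> carrier G"
  shows "subgroup_index G U (U \<inter> conj_set G h U)
       = subgroup_index G (conj_set G (inv h) U) (conj_set G (inv h) U \<inter> U)"
proof -
  have "conj_set G (inv h) (U \<inter> conj_set G h U) = conj_set G (inv h) U \<inter> U"
    using conj_set_Int[of "inv h" U "conj_set G h U"] conj_set_inv_conj_set
      conj_set_subset_carrier h U by simp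
  with subgroup_index_conj_set[of "inv h" U "U \<inter> conj_set G h U"] h U show ?thesis
    by (simp add: le_infI1)
qed

lemma subgroup_index_pos_subset:
  assumes H: "subgroup H G" and "H \<subseteq> K" and K: "0 < subgroup_index G K D"
  shows "0 < subgroup_index G H D"
proof -
  have "finite ((\<lambda>x. D #> x) ` K)"
    using K unfolding subgroup_index_def by (rule card_ge_0_finite)
  then have "finite ((\<lambda>x. D #> x) ` H)"
    using \<open>H \<subseteq> K\<close> by (meson finite_subset image_mono)
  moreover have "(\<lambda>x. D #> x) ` H \<noteq> {}"
    using subgroup.one_closed[OF H] by blast
  ultimately show ?thesis
    by (simp add: subgroup_index_def card_gt_0_iff)
qed

end

text \<open>Read as ratios: \<open>aU/bU = u/ug\<close> and \<open>aW/bW = w/wg\<close>, while \<open>u/w = eU/eW = ug/wg\<close>.\<close>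
lemma cross_mult_eq_transfer:
  fixes u ug w wg aU bU aW bW eU eW :: nat
  assumes c1: "u * bU = ug * aU" and c2: "w * bW = wg * aW"
    and c3: "u * eW = w * eU" and c4: "ug * eW = wg * eU"
    and pos: "0 < eW" "0 < ug" "0 < w"
  shows "aU * bW = aW * bU"
proof -
  have "u * wg * eW = w * ug * eW"
    by (metis c3 c4 mult.assoc mult.commute)
  then have uw: "u * wg = w * ug"
    using pos by simp
  have "aU * bW * (ug * w) = (ug * aU) * (w * bW)"
    by (simp add: ac_simps)
  also have "\<dots> = (u * bU) * (wg * aW)"
    by (simp only: c1 c2)
  also have "\<dots> = (u * wg) * (bU * aW)"
    by (simp add: ac_simps)
  also have "\<dots> = aW * bU * (ug * w)"
    by (simp add: uw ac_simps)
  finally show ?thesis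
    using pos by simp
qed

locale top_group = group G for G (structure) +
  fixes T :: "'a topology"
  assumes topological_group: "topological_group G T"
begin

lemma topspace_eq_carrier: "topspace T = carrier G"
  using topological_group by (simp add: topological_group_def)

lemma continuous_map_mult:
  assumes "continuous_map T T f" "continuous_map T T g"
  shows "continuous_map T T (\<lambda>x. f x \<otimes> g x)"
proof -
  have "continuous_map (prod_topology T T) T (\<lambda>p. fst p \<otimes> snd p)"
    using topological_group by (simp add: topological_group_def)
  from continuous_map_compose[OF continuous_map_pairedI[OF assms] this] show ?thesis
    by (simp add: o_def)
qed

lemma homeomorphic_map_mult:
  assumes a: "a \<in> carrier G" and b: "b \<in> carrier G"
  shows "homeomorphic_map T T (\<lambda>x. a \<otimes> x \<otimes> b)"
proof -
  have "continuous_map T T (\<lambda>x. c \<otimes> x \<otimes> d)" if "c \<in> carrier G" "d \<in> carrier G" for c d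
    using that by (intro continuous_map_mult) (simp_all add: topspace_eq_carrier)
  then have "homeomorphic_maps T T (\<lambda>x. a \<otimes> x \<otimes> b) (\<lambda>x. inv a \<otimes> x \<otimes> inv b)"
    using a b by (simp add: homeomorphic_maps_def topspace_eq_carrier m_assoc[symmetric])
      (simp add: m_assoc)
  then show ?thesis
    by (rule homeomorphic_maps_imp_map)
qed

lemma openin_rcoset:
  assumes X: "openin T X" and x: "x \<in> carrier G"
  shows "openin T (X #> x)"
proof -
  have "X \<subseteq> carrier G"
    using openin_subset[OF X] topspace_eq_carrier by simp
  have "X #> x = (\<lambda>y. y \<otimes> x) ` X"
    by (auto simp: r_coset_def)
  also have "\<dots> = (\<lambda>y. \<one> \<otimes> y \<otimes> x) ` X"
    using \<open>X \<subseteq> carrier G\<close> by (intro image_cong) (simp_all add: subset_iff)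
  finally show ?thesis
    using homeomorphic_map_openness[OF homeomorphic_map_mult[OF one_closed x], of X]
      X \<open>X \<subseteq> carrier G\<close> by (simp add: topspace_eq_carrier)
qed

lemma compact_open_subgroup_conj_set:
  assumes h: "h \<in> carrier G" and U: "compact_open_subgroup G T U"
  shows "compact_open_subgroup G T (conj_set G h U)"
proof -
  have "U \<subseteq> topspace T"
    using U subgroup.subset by (auto simp: compact_open_subgroup_def topspace_eq_carrier)
  with U subgroup_conj_set[OF h] show ?thesis
    using homeomorphic_map_openness[OF homeomorphic_map_mult[OF h inv_closed[OF h]]]
      homeomorphic_map_compactness[OF homeomorphic_map_mult[OF h inv_closed[OF h]]]
    by (simp add: compact_open_subgroup_def conj_set_eq_image)
qed

lemma subgroup_index_pos:
  assumes X: "compactin T X" "subgroup X G" and D: "openin T D" "subgroup D G"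
  shows "0 < subgroup_index G X D"
proof -
  let ?cosets = "(\<lambda>x. D #> x) ` X"
  have Xc: "X \<subseteq> carrier G"
    using X(2) subgroup.subset by blast
  have "X \<subseteq> \<Union>?cosets"
    using rcos_self[OF _ D(2)] Xc by blast
  moreover have "\<forall>V \<in> ?cosets. openin T V"
    using openin_rcoset[OF D(1)] Xc by blast
  ultimately obtain F where F: "finite F" "F \<subseteq> ?cosets" "X \<subseteq> \<Union>F"
    using X(1) unfolding compactin_def by meson
  have "?cosets \<subseteq> F"
  proof (rule image_subsetI)
    fix x assume "x \<in> X"
    then obtain S where S: "S \<in> F" "x \<in> S" using F(3) by blast
    then obtain x' where "x' \<in> X" "S = D #> x'" using F(2) by blast
    with S \<open>x \<in> X\<close> Xc show "D #> x \<in> F"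
      using repr_independence[OF _ _ D(2), of x x'] by auto
  qed
  then have "finite ?cosets"
    using F(1) finite_subset by blast
  moreover have "?cosets \<noteq> {}"
    using subgroup.one_closed[OF X(2)] by blast
  ultimately show ?thesis
    by (simp add: subgroup_index_def card_gt_0_iff)
qed

lemma subgroup_index_Int_cross_mult:
  assumes A: "compact_open_subgroup G T A" and B: "compact_open_subgroup G T B"
    and D: "subgroup D G" "openin T D" "D \<subseteq> A \<inter> B"
  shows "subgroup_index G A D * subgroup_index G B (A \<inter> B)
       = subgroup_index G B D * subgroup_index G A (A \<inter> B)"
proof -
  have AB: "subgroup (A \<inter> B) G" "openin T (A \<inter> B)"
    using A B subgroups_Inter_pair by (auto simp: compact_open_subgroup_def)
  have pos: "0 < subgroup_index G A (A \<inter> B)" "0 < subgroup_index G B (A \<inter> B)"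
    "0 < subgroup_index G A D"
    using A B AB D by (auto simp: compact_open_subgroup_def intro: subgroup_index_pos)
  then have "0 < subgroup_index G (A \<inter> B) D"
    using subgroup_index_pos_subset[OF AB(1)] by blast
  then have "subgroup_index G A D = subgroup_index G A (A \<inter> B) * subgroup_index G (A \<inter> B) D"
    "subgroup_index G B D = subgroup_index G B (A \<inter> B) * subgroup_index G (A \<inter> B) D"
    using subgroup_index_mult[OF _ AB(1) D(1) D(3)] pos A B
    by (auto simp: compact_open_subgroup_def)
  then show ?thesis
    by simp
qed

lemma subgroup_index_conj_ratio:
  assumes g: "g \<in> carrier G"
    and U: "compact_open_subgroup G T U" and W: "compact_open_subgroup G T W"
  shows "subgroup_index G U (U \<inter> conj_set G (inv g) U) * subgroup_index G W (W \<inter> conj_set G g W)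
       = subgroup_index G W (W \<inter> conj_set G (inv g) W) * subgroup_index G U (U \<inter> conj_set G g U)"
proof -
  define Ug Wg where "Ug = conj_set G (inv g) U" and "Wg = conj_set G (inv g) W"
  have Ug: "compact_open_subgroup G T Ug" and Wg: "compact_open_subgroup G T Wg"
    unfolding Ug_def Wg_def using g U W by (simp_all add: compact_open_subgroup_conj_set)
  have carrier: "U \<subseteq> carrier G" "W \<subseteq> carrier G"
    using U W subgroup.subset by (auto simp: compact_open_subgroup_def)
  have Ug_Int_Wg: "Ug \<inter> Wg = conj_set G (inv g) (U \<inter> W)"
    unfolding Ug_def Wg_def using conj_set_Int g carrier by simp
  define D where "D = (U \<inter> W) \<inter> (Ug \<inter> Wg)"
  have D: "subgroup D G" "openin T D"
    unfolding D_def using U W Ug Wg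
    by (auto simp: compact_open_subgroup_def intro!: subgroups_Inter_pair)
  have "D \<subseteq> U \<inter> Ug" "D \<subseteq> W \<inter> Wg" "D \<subseteq> U \<inter> W" "D \<subseteq> Ug \<inter> Wg"
    unfolding D_def by blast+
  note cross = subgroup_index_Int_cross_mult[OF _ _ D this(1)] subgroup_index_Int_cross_mult[OF _ _ D this(2)]
    subgroup_index_Int_cross_mult[OF _ _ D this(3)] subgroup_index_Int_cross_mult[OF _ _ D this(4)]
  have "subgroup_index G Ug (Ug \<inter> Wg) = subgroup_index G U (U \<inter> W)"
    "subgroup_index G Wg (Ug \<inter> Wg) = subgroup_index G W (U \<inter> W)"
    unfolding Ug_Int_Wg using subgroup_index_conj_set g carrier
    by (auto simp: Ug_def Wg_def le_infI1 le_infI2)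
  then have c_UgWg: "subgroup_index G Ug D * subgroup_index G W (U \<inter> W)
      = subgroup_index G Wg D * subgroup_index G U (U \<inter> W)"
    using cross(4)[OF Ug Wg] by simp
  have pos: "0 < subgroup_index G W (U \<inter> W)" "0 < subgroup_index G Ug D"
    "0 < subgroup_index G W D"
    using U W Ug D subgroups_Inter_pair
    by (auto simp: compact_open_subgroup_def intro!: subgroup_index_pos)
  have swap: "subgroup_index G U (U \<inter> conj_set G g U) = subgroup_index G Ug (U \<inter> Ug)"
    "subgroup_index G W (W \<inter> conj_set G g W) = subgroup_index G Wg (W \<inter> Wg)"
    using subgroup_index_Int_conj_set_inv g carrier by (simp_all add: Ug_def Wg_def Int_commute)
  show ?thesis
    unfolding Ug_def[symmetric] Wg_def[symmetric] swap
    by (rule cross_mult_eq_transfer[OF cross(1)[OF U Ug] cross(2)[OF W Wg] cross(3)[OF U W] c_UgWg pos])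
qed

end

lemma top_groupI: "topological_group G T \<Longrightarrow> top_group G T"
  by (simp add: top_group_def top_group_axioms_def topological_group_def)

lemma scale_eqI:
  assumes "compact_open_subgroup G T U"
    and "\<And>V. compact_open_subgroup G T V \<Longrightarrow>
      subgroup_index G U (U \<inter> conj_set G (inv\<^bsub>G\<^esub> g) U)
        \<le> subgroup_index G V (V \<inter> conj_set G (inv\<^bsub>G\<^esub> g) V)"
  shows "scale G T g = subgroup_index G U (U \<inter> conj_set G (inv\<^bsub>G\<^esub> g) U)"
  unfolding scale_def by (rule Least_equality) (use assms in auto)

theorem corollary4p12:
  fixes G :: "('a, 'b) monoid_scheme" and T :: "'a topology" and g :: 'a and U :: "'a set"
  assumes "tdlc_group G T"
    and "g \<in> carrier G"
    and "compact_open_subgroup G T U"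
    and "coprime (subgroup_index G U (U \<inter> conj_set G (inv\<^bsub>G\<^esub> g) U))
                 (subgroup_index G U (U \<inter> conj_set G g U))"
  shows "tidy G T g U \<and>
         scale G T g = subgroup_index G U (U \<inter> conj_set G (inv\<^bsub>G\<^esub> g) U)"
proof -
  interpret top_group G T
    using assms(1) by (intro top_groupI) (simp add: tdlc_group_def)
  let ?a = "\<lambda>V. subgroup_index G V (V \<inter> conj_set G (inv\<^bsub>G\<^esub> g) V)"
  let ?b = "\<lambda>V. subgroup_index G V (V \<inter> conj_set G g V)"
  have "?a U \<le> ?a V" if V: "compact_open_subgroup G T V" for V
  proof -
    have "?a U * ?b V = ?a V * ?b U"
      using subgroup_index_conj_ratio[OF assms(2,3) V] .
    then have "?a U dvd ?a V * ?b U"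
      by (metis dvd_triv_left)
    then have "?a U dvd ?a V"
      using coprime_dvd_mult_left_iff[OF assms(4)] by blast
    moreover have "0 < ?a V"
      using V compact_open_subgroup_conj_set[OF inv_closed[OF assms(2)] V] subgroups_Inter_pair
      by (auto simp: compact_open_subgroup_def intro!: subgroup_index_pos)
    ultimately show ?thesis
      by (rule dvd_imp_le)
  qed
  then have "scale G T g = ?a U"
    using scale_eqI[OF assms(3)] by blast
  with assms(3) show ?thesis
    by (simp add: tidy_def)
qed

end
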